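(* For integers $k\ge 0$, $n\ge1$, and variables $\lambda_1,\dots,\lambda_n$, let $$p_k(\lambda_1,\dots,\lambda_n)=(1-\lambda_1)\cdots(1-\lambda_n)\sum_{\alpha\in\mathbb Z_{\ge0}^n,\ 0\le|\alpha|<k}\lambda^\alpha,$$ where $\lambda^\alpha=\lambda_1^{\alpha_1}\cdots\lambda_n^{\alpha_n}$ and $|\alpha|=\alpha_1+\dots+\alpha_n$. For nonnegative integers $m,n,\ell$ put $$a_{mn\ell}=p_m(q^n,q^{n+1},\dots,q^{n+\ell})\in\mathbb Z[q].$$ Then $a_{mn\ell}=a_{nm\ell}$. *)

theory Defs
  imports "HOL-Computational_Algebra.Polynomial"
begin

text \<open>Multi-indices alpha in Z_{>=0}^n are represented as lists of naturals of length n;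
  the variables lambda_1..lambda_n as a list of length n.\<close>

definition multi_indices :: "nat \<Rightarrow> nat \<Rightarrow> nat list set" where
  "multi_indices n k = {as. length as = n \<and> sum_list as < k}"

definition mono_pow :: "'a::comm_ring_1 list \<Rightarrow> nat list \<Rightarrow> 'a" where
  "mono_pow xs as = prod_list (map2 (\<lambda>x a. x ^ a) xs as)"

definition p_poly :: "nat \<Rightarrow> 'a::comm_ring_1 list \<Rightarrow> 'a" where
  "p_poly k xs = prod_list (map (\<lambda>x. 1 - x) xs) *
     (\<Sum>as\<in>multi_indices (length xs) k. mono_pow xs as)"

definition a_coeff :: "nat \<Rightarrow> nat \<Rightarrow> nat \<Rightarrow> int poly" where
  "a_coeff m n l = p_poly m (map (\<lambda>i. [:0, 1:] ^ (n + i)) [0..<Suc l])"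

end

theory Submission
  imports Defs
begin

text \<open>Splitting the sum over \<open>|\<alpha>| < m\<close> by degree gives
  \<open>p\<^sub>m\<^sub>+\<^sub>1(x) = p\<^sub>m(x) + \<Prod>(1 - x\<^sub>i) \<cdot> h\<^sub>m(x)\<close> with \<open>h\<^sub>m\<close> the complete homogeneous
  symmetric polynomial. At \<open>x = (q\<^sup>n, \<dots>, q\<^sup>n\<^sup>+\<^sup>l)\<close> the increment \<open>d(m, n)\<close> is explicit:
  \<open>h\<^sub>m(1, q, \<dots>, q\<^sup>l)\<close> is a Gaussian binomial coefficient, so up to the factor
  \<open>(q; q)\<^sub>l\<close> we get \<open>d(m, n) = q\<^sup>n\<^sup>m (q\<^sup>n; q)\<^sub>l\<^sub>+\<^sub>1 (q\<^sup>m\<^sup>+\<^sup>1; q)\<^sub>l\<close>. From this one checks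
  \<open>d(n, m) + d(m, n + 1) = d(m, n) + d(n, m + 1)\<close>, and since \<open>a\<^sub>0\<^sub>n\<^sub>l = a\<^sub>m\<^sub>0\<^sub>l = 0\<close>
  a double induction on \<open>m, n\<close> yields the symmetry.\<close>

definition complete_hom :: "'a::comm_ring_1 list \<Rightarrow> nat \<Rightarrow> 'a" where
  "complete_hom xs k = (\<Sum>as | length as = length xs \<and> sum_list as = k. mono_pow xs as)"

lemma finite_multi_indices: "finite (multi_indices n k)"
proof -
  have "multi_indices n k \<subseteq> {xs. set xs \<subseteq> {..<k} \<and> length xs = n}"
    unfolding multi_indices_def using member_le_sum_list by fastforce
  moreover have "finite {xs. set xs \<subseteq> {..<k} \<and> length xs = n}"
    by (rule finite_lists_length_eq) simp
  ultimately show ?thesis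
    by (rule finite_subset)
qed

lemma finite_multi_indices_degree: "finite {as :: nat list. length as = n \<and> sum_list as = k}"
  by (rule finite_subset[OF _ finite_multi_indices[of n "Suc k"]]) (auto simp: multi_indices_def)

lemma p_poly_0: "p_poly 0 xs = 0"
  by (simp add: p_poly_def multi_indices_def)

lemma p_poly_Cons_1: "p_poly k (1 # xs) = 0"
  by (simp add: p_poly_def)

lemma p_poly_Suc:
  "p_poly (Suc k) xs = p_poly k xs + prod_list (map (\<lambda>x. 1 - x) xs) * complete_hom xs k"
proof -
  have "multi_indices (length xs) (Suc k)
      = multi_indices (length xs) k \<union> {as. length as = length xs \<and> sum_list as = k}"
    by (auto simp: multi_indices_def)
  moreover have "multi_indices (length xs) k \<inter> {as. length as = length xs \<and> sum_list as = k} = {}"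
    by (auto simp: multi_indices_def)
  ultimately show ?thesis
    unfolding p_poly_def complete_hom_def
    by (simp add: sum.union_disjoint finite_multi_indices finite_multi_indices_degree distrib_left)
qed

lemma complete_hom_Nil: "complete_hom [] k = (if k = 0 then 1 else 0)"
proof -
  have "{as::nat list. length as = 0 \<and> sum_list as = k} = (if k = 0 then {[]} else {})"
    by auto
  then show ?thesis
    by (simp add: complete_hom_def mono_pow_def)
qed

lemma complete_hom_Cons: "complete_hom (x # xs) k = (\<Sum>j\<le>k. x ^ j * complete_hom xs (k - j))"
proof -
  let ?S = "\<lambda>n k. {as::nat list. length as = n \<and> sum_list as = k}"
  let ?I = "SIGMA j:{..k}. ?S (length xs) (k - j)"
  have decompose: "?S (Suc (length xs)) k = (\<lambda>(j, as). j # as) ` ?I"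
  proof (rule set_eqI)
    fix bs
    show "bs \<in> ?S (Suc (length xs)) k \<longleftrightarrow> bs \<in> (\<lambda>(j, as). j # as) ` ?I"
      by (cases bs) (auto intro: image_eqI[where x = "(hd bs, tl bs)"])
  qed
  have inj: "inj_on (\<lambda>(j, as). j # as) ?I"
    by (auto simp: inj_on_def)
  have "complete_hom (x # xs) k = (\<Sum>(j, as)\<in>?I. x ^ j * mono_pow xs as)"
    unfolding complete_hom_def length_Cons decompose sum.reindex[OF inj]
    by (simp add: split_def mono_pow_def)
  also have "\<dots> = (\<Sum>j\<le>k. x ^ j * complete_hom xs (k - j))"
    by (simp add: sum.Sigma[symmetric] finite_multi_indices_degree complete_hom_def sum_distrib_left)
  finally show ?thesis .
qed

lemma complete_hom_0: "complete_hom xs 0 = 1"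
  by (induction xs) (simp_all add: complete_hom_Nil complete_hom_Cons)

lemma complete_hom_Cons_Suc:
  "complete_hom (x # xs) (Suc k) = complete_hom xs (Suc k) + x * complete_hom (x # xs) k"
  unfolding complete_hom_Cons sum.atMost_Suc_shift
  by (simp add: sum_distrib_left algebra_simps)

lemma complete_hom_singleton: "complete_hom [x] k = x ^ k"
  by (induction k) (simp_all add: complete_hom_0 complete_hom_Cons_Suc complete_hom_Nil)

lemma mono_pow_scale:
  "length as = length xs \<Longrightarrow> mono_pow (map ((*) c) xs) as = c ^ sum_list as * mono_pow xs as"
proof (induction xs arbitrary: as)
  case Nil
  then show ?case
    by (simp add: mono_pow_def)
next
  case (Cons x xs)
  then obtain a bs where "as = a # bs" "length bs = length xs"
    by (cases as) auto
  with Cons.IH show ?case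
    by (simp add: mono_pow_def power_mult_distrib power_add algebra_simps)
qed

lemma complete_hom_scale: "complete_hom (map ((*) c) xs) k = c ^ k * complete_hom xs k"
  unfolding complete_hom_def sum_distrib_left
  by (rule sum.cong) (auto simp: mono_pow_scale)

definition q_pochhammer :: "'a::comm_ring_1 \<Rightarrow> nat \<Rightarrow> nat \<Rightarrow> 'a" where
  "q_pochhammer q a n = (\<Prod>i<n. 1 - q ^ (a + i))"

lemma q_pochhammer_Suc: "q_pochhammer q a (Suc n) = q_pochhammer q a n * (1 - q ^ (a + n))"
  by (simp add: q_pochhammer_def)

lemma q_pochhammer_Suc_shift: "q_pochhammer q a (Suc n) = (1 - q ^ a) * q_pochhammer q (Suc a) n"
  unfolding q_pochhammer_def prod.lessThan_Suc_shift by simp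

lemma q_pochhammer_X_nonzero:
  assumes "0 < a"
  shows "q_pochhammer ([:0, 1:] :: 'a::idom poly) a n \<noteq> 0"
proof -
  have "poly (1 - [:0, 1:] ^ (a + i) :: 'a poly) 0 \<noteq> 0" for i
    using assms by (simp add: power_0_left)
  then have "1 - [:0, 1:] ^ (a + i) \<noteq> (0 :: 'a poly)" for i
    by (metis poly_0)
  then show ?thesis
    by (simp add: q_pochhammer_def)
qed

definition geom_list :: "'a::comm_ring_1 \<Rightarrow> nat \<Rightarrow> nat \<Rightarrow> 'a list" where
  "geom_list q a n = map (\<lambda>i. q ^ (a + i)) [0..<n]"

lemma geom_list_Suc: "geom_list q a (Suc n) = q ^ a # geom_list q (Suc a) n"
  unfolding geom_list_def by (simp add: upt_conv_Cons map_Suc_upt[symmetric] del: upt_Suc)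

lemma prod_one_minus_geom_list: "prod_list (map (\<lambda>x. 1 - x) (geom_list q a n)) = q_pochhammer q a n"
  by (induction n) (simp_all add: geom_list_def q_pochhammer_def)

lemma complete_hom_geom_list:
  "complete_hom (geom_list q a n) k = q ^ (a * k) * complete_hom (geom_list q 0 n) k"
proof -
  have "geom_list q a n = map ((*) (q ^ a)) (geom_list q 0 n)"
    by (simp add: geom_list_def power_add)
  then show ?thesis
    by (simp add: complete_hom_scale power_mult)
qed

text \<open>\<open>h\<^sub>k(1, q, \<dots>, q\<^sup>n)\<close> is the Gaussian binomial coefficient \<open>[n + k, n]\<^sub>q\<close>; the induction
  step is its \<open>q\<close>-Pascal recurrence.\<close>

lemma q_binomial_complete_hom:
  "q_pochhammer q 1 n * complete_hom (geom_list q 0 (Suc n)) k = q_pochhammer q (Suc k) n"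
proof (induction n arbitrary: k)
  case 0
  then show ?case
    by (simp add: geom_list_def q_pochhammer_def complete_hom_singleton)
next
  case (Suc n)
  note outer_IH = Suc.IH
  show ?case
  proof (induction k)
    case 0
    then show ?case
      by (simp add: complete_hom_0)
  next
    case (Suc k)
    have "complete_hom (geom_list q 0 (Suc (Suc n))) (Suc k)
        = q ^ Suc k * complete_hom (geom_list q 0 (Suc n)) (Suc k)
          + complete_hom (geom_list q 0 (Suc (Suc n))) k"
      using complete_hom_geom_list[of q 1 "Suc n" "Suc k"]
      by (simp add: geom_list_Suc[of q 0 "Suc n"] complete_hom_Cons_Suc)
    then have "q_pochhammer q 1 (Suc n) * complete_hom (geom_list q 0 (Suc (Suc n))) (Suc k)
        = q ^ Suc k * (1 - q ^ Suc n) * q_pochhammer q (Suc (Suc k)) n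
          + q_pochhammer q (Suc k) (Suc n)"
      using Suc.IH outer_IH[of "Suc k"]
      by (simp add: q_pochhammer_Suc algebra_simps)
    also have "\<dots> = q_pochhammer q (Suc (Suc k)) (Suc n)"
      unfolding q_pochhammer_Suc_shift[of q "Suc k" n] q_pochhammer_Suc[of q "Suc (Suc k)" n]
      by (simp add: power_add algebra_simps)
    finally show ?case .
  qed
qed

lemma symmetric_by_increments:
  fixes f d :: "nat \<Rightarrow> nat \<Rightarrow> 'a::ab_group_add"
  assumes base: "\<And>n. f 0 n = f n 0"
    and step: "\<And>m n. f (Suc m) n = f m n + d m n"
    and exchange: "\<And>m n. d n m + d m (Suc n) = d m n + d n (Suc m)"
  shows "f m n = f n m"
proof (induction m arbitrary: n)
  case 0
  show ?case
    by (rule base)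
next
  case (Suc m)
  note outer_IH = Suc.IH
  show ?case
  proof (induction n)
    case 0
    show ?case
      by (rule base[symmetric])
  next
    case (Suc n)
    have "f (Suc m) (Suc n) = f m n + (d n m + d m (Suc n))"
      using outer_IH[of "Suc n"] outer_IH[of n]
      by (simp add: step algebra_simps)
    also have "\<dots> = f (Suc n) (Suc m)"
      using Suc.IH by (simp add: exchange step algebra_simps)
    finally show ?case .
  qed
qed

lemma p_poly_geom_list_sym:
  fixes q :: "'a::idom"
  assumes nonzero: "q_pochhammer q 1 l \<noteq> 0"
  shows "p_poly m (geom_list q n (Suc l)) = p_poly n (geom_list q m (Suc l))"
proof -
  define d where "d m n = q_pochhammer q n (Suc l) * complete_hom (geom_list q n (Suc l)) m" for m n
  define R where "R m = q_pochhammer q (Suc m) l" for m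
  have scaled: "q_pochhammer q 1 l * d m n = q ^ (n * m) * q_pochhammer q n (Suc l) * R m" for m n
    using q_binomial_complete_hom[of q l m]
    by (simp add: d_def R_def complete_hom_geom_list[of q n] algebra_simps)
  have symmetric_form:
    "q_pochhammer q 1 l * (d n m + d m (Suc n)) = q ^ (n * m) * (1 - q ^ (n + m + Suc l)) * R n * R m"
    for m n
  proof -
    have split_first: "q_pochhammer q m (Suc l) = (1 - q ^ m) * R m"
      unfolding R_def by (rule q_pochhammer_Suc_shift)
    have split_last: "q_pochhammer q (Suc n) (Suc l) = R n * (1 - q ^ (Suc n + l))"
      unfolding R_def by (rule q_pochhammer_Suc)
    show ?thesis
      unfolding distrib_left scaled[of n m] scaled[of m "Suc n"] split_first split_last
      by (simp add: power_add algebra_simps)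
  qed
  show ?thesis
  proof (rule symmetric_by_increments[where f = "\<lambda>m n. p_poly m (geom_list q n (Suc l))"])
    show "p_poly 0 (geom_list q n (Suc l)) = p_poly n (geom_list q 0 (Suc l))" for n
      by (simp add: p_poly_0 p_poly_Cons_1 geom_list_Suc)
    show "p_poly (Suc m) (geom_list q n (Suc l)) = p_poly m (geom_list q n (Suc l)) + d m n" for m n
      by (simp add: p_poly_Suc d_def prod_one_minus_geom_list)
    show "d n m + d m (Suc n) = d m n + d n (Suc m)" for m n
    proof (rule mult_left_cancel[OF nonzero, THEN iffD1])
      show "q_pochhammer q 1 l * (d n m + d m (Suc n)) = q_pochhammer q 1 l * (d m n + d n (Suc m))"
        unfolding symmetric_form by (simp add: ac_simps)
    qed
  qed
qed

theorem lemma6p1: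
  fixes m n l :: nat
  shows "a_coeff m n l = a_coeff n m l"
  using p_poly_geom_list_sym[OF q_pochhammer_X_nonzero[of 1 l]]
  by (simp add: a_coeff_def geom_list_def)

end
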